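(* Let $\{X_n\}_{n=-\infty}^{\infty}$ be a stationary and ergodic time series taking values in a finite alphabet $\mathcal{X}$. Let $K_n\ge1$ and $J_n\ge1$ be nondecreasing sequences of positive integers with $K_n\to\infty$, $J_n\to\infty$ and $\lim_{n\to\infty}J_n/n=0$. Then $\lim_{n\to\infty}\kappa_n=\infty$ almost surely.
   Context: Notation: $X_m^n=(X_m,\dots,X_n)$. For $k\ge1$ and $n\ge0$, $\tau^k_0(n)=0$ and for $i\ge1$, $\tau^k_i(n)=\min\{t>\tau^k_{i-1}(n): X_{n-k+1-t}^{n-t}=X_{n-k+1}^n\}$. Define $\kappa_n=\max\{1\le k\le K_n:\tau^k_{J_n}(n)\le n-k+1\}$ if such a $k$ exists, and $\kappa_n=0$ otherwise; i.e. $\kappa_n$ is the largest $k\le K_n$ such that the block $X_{n-k+1}^n$ has at least $J_n$ earlier occurrences within the data segment $X_0^n$. *)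

theory Defs
  imports "HOL-Probability.Probability"
begin

abbreviation path_space :: "(int \<Rightarrow> 'b) measure" where
  "path_space \<equiv> PiM UNIV (\<lambda>_. count_space UNIV)"

definition stationary_process :: "'a measure \<Rightarrow> (int \<Rightarrow> 'a \<Rightarrow> 'b) \<Rightarrow> bool" where
  "stationary_process M X \<longleftrightarrow>
     (\<forall>i. X i \<in> measurable M (count_space UNIV)) \<and>
     (\<forall>s::int. distr M path_space (\<lambda>\<omega> i. X (i + s) \<omega>) = distr M path_space (\<lambda>\<omega> i. X i \<omega>))"

definition ergodic_process :: "'a measure \<Rightarrow> (int \<Rightarrow> 'a \<Rightarrow> 'b) \<Rightarrow> bool" where
  "ergodic_process M X \<longleftrightarrow>
     (\<forall>A \<in> sets path_space. (\<forall>x. x \<in> A \<longleftrightarrow> (\<lambda>i. x (i + 1)) \<in> A) \<longrightarrow>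
        measure M {\<omega> \<in> space M. (\<lambda>i. X i \<omega>) \<in> A} \<in> {0, 1})"

definition blk_match :: "(int \<Rightarrow> 'a \<Rightarrow> 'b) \<Rightarrow> nat \<Rightarrow> nat \<Rightarrow> nat \<Rightarrow> 'a \<Rightarrow> bool" where
  "blk_match X k n t \<omega> \<longleftrightarrow>
     (\<forall>j<k. X (int n - int k + 1 - int t + int j) \<omega> = X (int n - int k + 1 + int j) \<omega>)"

fun tau :: "(int \<Rightarrow> 'a \<Rightarrow> 'b) \<Rightarrow> nat \<Rightarrow> nat \<Rightarrow> nat \<Rightarrow> 'a \<Rightarrow> enat" where
  "tau X k n 0 \<omega> = 0"
| "tau X k n (Suc i) \<omega> =
     (if tau X k n i \<omega> = \<infinity> then \<infinity>
      else let s = the_enat (tau X k n i \<omega>) in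
        (if \<exists>t>s. blk_match X k n t \<omega>
         then enat (LEAST t. t > s \<and> blk_match X k n t \<omega>) else \<infinity>))"

text \<open>kappa_n; the condition tau <= n-k+1 is read over the integers.\<close>
definition kappa :: "(int \<Rightarrow> 'a \<Rightarrow> 'b) \<Rightarrow> (nat \<Rightarrow> nat) \<Rightarrow> (nat \<Rightarrow> nat) \<Rightarrow> nat \<Rightarrow> 'a \<Rightarrow> nat" where
  "kappa X K J n \<omega> =
     (let S = {k. 1 \<le> k \<and> k \<le> K n \<and> k \<le> n + 1 \<and> tau X k n (J n) \<omega> \<le> enat (n + 1 - k)}
      in if S = {} then 0 else Max S)"

end

theory Submission
  imports Defs
begin

text \<open>Stationarity and ergodicity make the left shift of path space a measure-preserving ergodic
  map. For a cylinder \<open>C\<close> of positive measure, the set of paths visiting \<open>C\<close> with positive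
  lower density is shift-invariant, and it is not null: otherwise, for small \<open>\<epsilon>\<close> and large
  \<open>N\<close>, almost every starting point would begin a window of length at most \<open>N\<close> in which the
  density of \<open>C\<close> is below \<open>\<epsilon>\<close>, and a greedy covering of the time axis by such windows gives
  \<open>measure C \<le> 2\<epsilon> + o(1)\<close>. Hence almost surely every block that occurs at all recurs with
  positive density. There are finitely many blocks of each length \<open>k\<close> and \<open>J\<^sub>n = o(n)\<close>, so for
  large \<open>n\<close> the last \<open>k\<close>-block has at least \<open>J\<^sub>n\<close> earlier occurrences; with \<open>K\<^sub>n \<rightarrow> \<infinity>\<close> this
  gives \<open>\<kappa>\<^sub>n \<rightarrow> \<infinity>\<close>.\<close>

definition path_shift :: "nat \<Rightarrow> (int \<Rightarrow> 'b) \<Rightarrow> int \<Rightarrow> 'b" where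
  "path_shift m x = (\<lambda>i. x (i + int m))"

definition visits :: "(int \<Rightarrow> 'b) set \<Rightarrow> nat \<Rightarrow> (int \<Rightarrow> 'b) \<Rightarrow> nat" where
  "visits C n x = card {m. m < n \<and> path_shift m x \<in> C}"

lemma space_path_space [simp]: "space (path_space :: (int \<Rightarrow> 'b) measure) = UNIV"
  by (simp add: space_PiM)

lemma measurable_path_shift [measurable]:
  "path_shift m \<in> measurable (path_space :: (int \<Rightarrow> 'b) measure) path_space"
  unfolding path_shift_def by (rule measurable_PiM_single') auto

lemma sets_path_shift_vimage [measurable]:
  "A \<in> sets (path_space :: (int \<Rightarrow> 'b) measure) \<Longrightarrow> path_shift m -` A \<in> sets path_space"
  using measurable_sets[OF measurable_path_shift, of A m] by simp

lemma sets_path_space_Collect: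
  "Measurable.pred (path_space :: (int \<Rightarrow> 'b) measure) P \<Longrightarrow> {x. P x} \<in> sets path_space"
  by (simp add: pred_def)

lemma path_shift_0 [simp]: "path_shift 0 x = x"
  by (simp add: path_shift_def)

lemma path_shift_path_shift [simp]: "path_shift m (path_shift i x) = path_shift (i + m) x"
  by (simp add: path_shift_def ac_simps)

lemma visits_0 [simp]: "visits C 0 x = 0"
  by (simp add: visits_def)

lemma visits_Suc: "visits C (Suc n) x = visits C n x + (if path_shift n x \<in> C then 1 else 0)"
proof -
  have "{m. m < Suc n \<and> path_shift m x \<in> C} =
      (if path_shift n x \<in> C then insert n {m. m < n \<and> path_shift m x \<in> C}
       else {m. m < n \<and> path_shift m x \<in> C})"
    by (auto simp: less_Suc_eq)
  then show ?thesis by (simp add: visits_def)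
qed

lemma visits_eq_sum_indicator: "real (visits C n x) = (\<Sum>m<n. indicator (path_shift m -` C) x)"
  by (induction n) (simp_all add: visits_Suc indicator_def)

lemma measurable_visits [measurable]:
  assumes [measurable]: "C \<in> sets (path_space :: (int \<Rightarrow> 'b) measure)"
  shows "(\<lambda>x. real (visits C n x)) \<in> borel_measurable (path_space :: (int \<Rightarrow> 'b) measure)"
  unfolding visits_eq_sum_indicator by measurable

lemma visits_add: "visits C (i + n) x = visits C i x + visits C n (path_shift i x)"
  by (induction n) (simp_all add: visits_Suc)

lemma visits_Suc_path_shift_1:
  "visits C (Suc n) x = (if x \<in> C then 1 else 0) + visits C n (path_shift 1 x)"
  using visits_add[of C 1 n x] by (simp add: visits_Suc)

lemma visits_mono: "m \<le> n \<Longrightarrow> visits C m x \<le> visits C n x"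
  using visits_add[of C m "n - m" x] by simp

text \<open>Greedy covering: a window of low \<open>C\<close>-density from each start outside \<open>B\<close>, a single step
  from each start in \<open>B\<close>.\<close>
lemma visits_le_short_window_cover:
  assumes "N \<ge> 1" and "\<epsilon> \<ge> 0"
    and windows: "\<And>i. path_shift i x \<notin> B \<Longrightarrow>
      \<exists>n\<in>{1..N}. real (visits C n (path_shift i x)) < \<epsilon> * n"
  shows "\<exists>i. L \<le> i \<and> i \<le> L + N \<and> real (visits C i x) \<le> \<epsilon> * i + real (visits B i x)"
proof (induction L)
  case 0
  show ?case by (intro exI[of _ 0]) simp
next
  case (Suc L)
  then obtain i where i: "L \<le> i" "i \<le> L + N" "real (visits C i x) \<le> \<epsilon> * i + real (visits B i x)"
    by blast
  consider "Suc L \<le> i" | "i = L \<and> path_shift i x \<in> B" | "i = L \<and> path_shift i x \<notin> B"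
    using i(1) by linarith
  then show ?case
  proof cases
    case 1
    then show ?thesis using i by auto
  next
    case 2
    then have "real (visits C (Suc i) x) \<le> \<epsilon> * Suc i + real (visits B (Suc i) x)"
      using i(3) \<open>\<epsilon> \<ge> 0\<close> by (auto simp: visits_Suc algebra_simps)
    then show ?thesis using 2 \<open>N \<ge> 1\<close> by (intro exI[of _ "Suc i"]) auto
  next
    case 3
    then obtain n where n: "n \<in> {1..N}" "real (visits C n (path_shift i x)) < \<epsilon> * n"
      using windows by blast
    have "real (visits C (i + n) x) = real (visits C i x) + real (visits C n (path_shift i x))"
      by (simp add: visits_add)
    also have "\<dots> \<le> \<epsilon> * (i + n) + real (visits B (i + n) x)"
      using i(3) n(2) visits_mono[of i "i + n" B x] by (simp add: algebra_simps)
    finally show ?thesis using 3 n(1) by (intro exI[of _ "i + n"]) auto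
  qed
qed

lemma visits_le_by_short_windows:
  assumes "N \<ge> 1" and "\<epsilon> \<ge> 0"
    and "\<And>i. path_shift i x \<notin> B \<Longrightarrow> \<exists>n\<in>{1..N}. real (visits C n (path_shift i x)) < \<epsilon> * n"
  shows "real (visits C L x) \<le> \<epsilon> * real (L + N) + real (visits B (L + N) x)"
proof -
  obtain i where i: "L \<le> i" "i \<le> L + N" "real (visits C i x) \<le> \<epsilon> * i + real (visits B i x)"
    using visits_le_short_window_cover[OF assms] by blast
  have "real (visits C L x) \<le> real (visits C i x)"
    using visits_mono[OF i(1)] by simp
  also have "\<dots> \<le> \<epsilon> * real (L + N) + real (visits B (L + N) x)"
  proof -
    have "\<epsilon> * i \<le> \<epsilon> * real (L + N)"
      using i(2) \<open>\<epsilon> \<ge> 0\<close> by (intro mult_left_mono) auto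
    then show ?thesis using i(3) visits_mono[OF i(2), of B x] by linarith
  qed
  finally show ?thesis .
qed

definition pos_lower_density :: "(int \<Rightarrow> 'b) set \<Rightarrow> (int \<Rightarrow> 'b) set" where
  "pos_lower_density C =
     {x. \<exists>j::nat. \<exists>N. \<forall>n\<ge>N. real n / real (Suc j) \<le> real (visits C n x)}"

definition dense_prefixes :: "real \<Rightarrow> nat \<Rightarrow> (int \<Rightarrow> 'b) set \<Rightarrow> (int \<Rightarrow> 'b) set" where
  "dense_prefixes \<epsilon> N C = {x. \<forall>n\<in>{1..N}. \<epsilon> * n \<le> real (visits C n x)}"

lemma sets_pos_lower_density [measurable]:
  "C \<in> sets (path_space :: (int \<Rightarrow> 'b) measure) \<Longrightarrow> pos_lower_density C \<in> sets path_space"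
  unfolding pos_lower_density_def by (rule sets_path_space_Collect) measurable

lemma sets_dense_prefixes [measurable]:
  "C \<in> sets (path_space :: (int \<Rightarrow> 'b) measure) \<Longrightarrow> dense_prefixes \<epsilon> N C \<in> sets path_space"
  unfolding dense_prefixes_def by (rule sets_path_space_Collect) measurable

lemma decseq_dense_prefixes: "decseq (\<lambda>N. dense_prefixes \<epsilon> N C)"
  unfolding decseq_def dense_prefixes_def by auto

lemma Inter_dense_prefixes_subset:
  assumes "\<epsilon> > 0"
  shows "(\<Inter>N. dense_prefixes \<epsilon> N C) \<subseteq> pos_lower_density C"
proof
  fix x assume "x \<in> (\<Inter>N. dense_prefixes \<epsilon> N C)"
  then have dense: "\<epsilon> * n \<le> real (visits C n x)" if "n \<ge> 1" for n
    using that unfolding dense_prefixes_def by fastforce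
  obtain j :: nat where j: "j > 0" "inverse (real j) < \<epsilon>"
    using ex_inverse_of_nat_less[OF assms] by blast
  have "real n / real (Suc j) \<le> real (visits C n x)" if "n \<ge> 1" for n
  proof -
    have "real n / real (Suc j) \<le> inverse (real j) * n"
      using j(1) by (simp add: field_simps)
    also have "\<dots> \<le> \<epsilon> * n"
      using j(2) by (intro mult_right_mono) auto
    finally show ?thesis using dense[OF that] by linarith
  qed
  then show "x \<in> pos_lower_density C"
    unfolding pos_lower_density_def by blast
qed

text \<open>Dropping or adding the first step changes the visit counts by at most one, which is
  absorbed by halving the density bound.\<close>
lemma pos_lower_density_path_shift_1_iff:
  "path_shift 1 x \<in> pos_lower_density C \<longleftrightarrow> x \<in> pos_lower_density C"
proof
  assume "x \<in> pos_lower_density C"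
  then obtain j N where jN: "\<And>n. n \<ge> N \<Longrightarrow> real n / real (Suc j) \<le> real (visits C n x)"
    unfolding pos_lower_density_def by blast
  have "real n / real (Suc (2 * j + 1)) \<le> real (visits C n (path_shift 1 x))"
    if n: "n \<ge> N + 2 * Suc j" for n
  proof -
    have "(1 + real j) * (2 * real j) \<le> (1 + real j) * real n"
      using n by (intro mult_left_mono) auto
    then have "real n / real (Suc (2 * j + 1)) \<le> real (Suc n) / real (Suc j) - 1"
      using n by (simp add: field_simps)
    moreover have "real (visits C (Suc n) x) \<le> real (visits C n (path_shift 1 x)) + 1"
      by (simp add: visits_Suc_path_shift_1)
    ultimately show ?thesis using jN[of "Suc n"] n by simp
  qed
  then show "path_shift 1 x \<in> pos_lower_density C"
    unfolding pos_lower_density_def by blast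
next
  assume "path_shift 1 x \<in> pos_lower_density C"
  then obtain j N
    where jN: "\<And>n. n \<ge> N \<Longrightarrow> real n / real (Suc j) \<le> real (visits C n (path_shift 1 x))"
    unfolding pos_lower_density_def by blast
  have "real (Suc n) / real (Suc (2 * j + 1)) \<le> real (visits C (Suc n) x)"
    if n: "n \<ge> N + 1" for n
  proof -
    have "(1 + real j) * 1 \<le> (1 + real j) * real n"
      using n by (intro mult_left_mono) auto
    then have "real (Suc n) / real (Suc (2 * j + 1)) \<le> real n / real (Suc j)"
      by (simp add: field_simps)
    moreover have "real (visits C n (path_shift 1 x)) \<le> real (visits C (Suc n) x)"
      by (simp add: visits_Suc_path_shift_1)
    ultimately show ?thesis using jN[of n] n by simp
  qed
  then have "real n / real (Suc (2 * j + 1)) \<le> real (visits C n x)" if "n \<ge> N + 2" for n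
    using that by (cases n) auto
  then show "x \<in> pos_lower_density C"
    unfolding pos_lower_density_def by blast
qed

locale shift_invariant_measure = prob_space \<mu> for \<mu> :: "(int \<Rightarrow> 'b) measure" +
  assumes sets_eq_path_space: "sets \<mu> = sets path_space"
    and measure_path_shift_vimage:
      "A \<in> sets path_space \<Longrightarrow> measure \<mu> (path_shift m -` A) = measure \<mu> A"
begin

lemma space_eq_UNIV: "space \<mu> = UNIV"
  using sets_eq_imp_space_eq[OF sets_eq_path_space] by simp

lemma integrable_visits:
  "C \<in> sets path_space \<Longrightarrow> integrable \<mu> (\<lambda>x. real (visits C n x))"
  unfolding visits_eq_sum_indicator
  by (intro Bochner_Integration.integrable_sum integrable_real_indicator)
     (auto simp: sets_eq_path_space less_top[symmetric])

lemma integral_visits: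
  assumes "C \<in> sets path_space"
  shows "(\<integral>x. real (visits C n x) \<partial>\<mu>) = real n * measure \<mu> C"
proof -
  have "(\<integral>x. real (visits C n x) \<partial>\<mu>) = (\<Sum>m<n. measure \<mu> (path_shift m -` C))"
    unfolding visits_eq_sum_indicator using assms
    by (subst Bochner_Integration.integral_sum)
       (auto simp: sets_eq_path_space space_eq_UNIV less_top[symmetric])
  then show ?thesis using assms by (simp add: measure_path_shift_vimage)
qed

lemma measure_le_dense_prefixes:
  assumes C: "C \<in> sets path_space" and "N \<ge> 1" and "\<epsilon> \<ge> 0"
  shows "measure \<mu> C \<le> 2 * \<epsilon> + 2 * measure \<mu> (dense_prefixes \<epsilon> N C)"
proof -
  let ?B = "dense_prefixes \<epsilon> N C"
  have B: "?B \<in> sets path_space" using C by measurable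
  have "real (visits C N x) \<le> \<epsilon> * real (N + N) + real (visits ?B (N + N) x)" for x
    by (rule visits_le_by_short_windows[OF \<open>N \<ge> 1\<close> \<open>\<epsilon> \<ge> 0\<close>])
       (auto simp: dense_prefixes_def not_le)
  then have "(\<integral>x. real (visits C N x) \<partial>\<mu>) \<le> (\<integral>x. \<epsilon> * real (N + N) + real (visits ?B (N + N) x) \<partial>\<mu>)"
    using C B by (intro integral_mono integrable_visits Bochner_Integration.integrable_add) auto
  then have "real N * measure \<mu> C \<le> real N * (2 * \<epsilon> + 2 * measure \<mu> ?B)"
    using C B integrable_visits[OF B] by (simp add: integral_visits prob_space algebra_simps)
  then show ?thesis using \<open>N \<ge> 1\<close> by simp
qed

text \<open>If almost no path visited \<open>C\<close> with positive density, the dense prefixes would shrink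
  to a null set, and \<open>measure_le_dense_prefixes\<close> with \<open>\<epsilon> = measure \<mu> C / 4\<close> would fail.\<close>
lemma measure_pos_lower_density_pos:
  assumes C: "C \<in> sets path_space" and pos: "measure \<mu> C > 0"
  shows "measure \<mu> (pos_lower_density C) > 0"
proof (rule ccontr)
  assume "\<not> ?thesis"
  then have null: "measure \<mu> (pos_lower_density C) = 0"
    using measure_nonneg[of \<mu>] by (meson antisym not_le)
  define \<epsilon> where "\<epsilon> = measure \<mu> C / 4"
  have "\<epsilon> > 0" using pos by (simp add: \<epsilon>_def)
  have sets: "range (\<lambda>N. dense_prefixes \<epsilon> N C) \<subseteq> sets \<mu>"
    using C by (auto simp: sets_eq_path_space)
  have "measure \<mu> (\<Inter>N. dense_prefixes \<epsilon> N C) \<le> measure \<mu> (pos_lower_density C)"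
    using C by (intro finite_measure_mono[OF Inter_dense_prefixes_subset[OF \<open>\<epsilon> > 0\<close>]])
      (simp add: sets_eq_path_space)
  then have "measure \<mu> (\<Inter>N. dense_prefixes \<epsilon> N C) = 0"
    using null measure_nonneg[of \<mu>] by (simp add: antisym)
  then have "(\<lambda>N. measure \<mu> (dense_prefixes \<epsilon> N C)) \<longlonglongrightarrow> 0"
    using finite_Lim_measure_decseq[OF sets decseq_dense_prefixes] by simp
  then have "\<forall>\<^sub>F N in sequentially. measure \<mu> (dense_prefixes \<epsilon> N C) < \<epsilon>"
    using \<open>\<epsilon> > 0\<close> by (rule order_tendstoD(2))
  then obtain N where "measure \<mu> (dense_prefixes \<epsilon> (Suc N) C) < \<epsilon>"
    unfolding eventually_sequentially by (meson le_SucI le_refl)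
  with measure_le_dense_prefixes[OF C, of "Suc N" \<epsilon>] \<open>\<epsilon> > 0\<close> show False
    by (simp add: \<epsilon>_def)
qed

lemma AE_never_visits:
  assumes "C \<in> sets path_space" and "measure \<mu> C = 0"
  shows "AE x in \<mu>. \<forall>m. path_shift m x \<notin> C"
proof (subst AE_all_countable, rule allI)
  fix m
  have "measure \<mu> (path_shift m -` C) = 0"
    using assms by (simp add: measure_path_shift_vimage)
  then show "AE x in \<mu>. path_shift m x \<notin> C"
    using assms(1) prob_eq_0[of "path_shift m -` C"] by (simp add: sets_eq_path_space)
qed

end

locale ergodic_shift_measure = shift_invariant_measure +
  assumes measure_shift_invariant_set:
    "A \<in> sets path_space \<Longrightarrow> (\<And>x. path_shift 1 x \<in> A \<longleftrightarrow> x \<in> A) \<Longrightarrow> measure \<mu> A \<in> {0, 1}"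
begin

lemma AE_pos_lower_density:
  assumes "C \<in> sets path_space" and "measure \<mu> C > 0"
  shows "AE x in \<mu>. x \<in> pos_lower_density C"
proof -
  have "measure \<mu> (pos_lower_density C) \<in> {0, 1}"
    using assms(1) by (intro measure_shift_invariant_set sets_pos_lower_density
      pos_lower_density_path_shift_1_iff)
  then have "measure \<mu> (pos_lower_density C) = 1"
    using measure_pos_lower_density_pos[OF assms] by auto
  then show ?thesis
    using assms(1) prob_eq_1[of "pos_lower_density C"] by (simp add: sets_eq_path_space)
qed

lemma AE_never_visits_or_pos_lower_density:
  assumes "C \<in> sets path_space"
  shows "AE x in \<mu>. (\<forall>m. path_shift m x \<notin> C) \<or> x \<in> pos_lower_density C"
proof (cases "measure \<mu> C = 0")
  case True
  show ?thesis using AE_never_visits[OF assms True] by eventually_elim simp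
next
  case False
  then have "measure \<mu> C > 0" using measure_nonneg[of \<mu> C] by linarith
  show ?thesis using AE_pos_lower_density[OF assms \<open>measure \<mu> C > 0\<close>] by eventually_elim simp
qed

end

definition cylinder :: "'b list \<Rightarrow> (int \<Rightarrow> 'b) set" where
  "cylinder bl = {y. \<forall>j<length bl. y (int j) = bl ! j}"

definition block :: "nat \<Rightarrow> nat \<Rightarrow> (int \<Rightarrow> 'b) \<Rightarrow> 'b list" where
  "block k s x = map (\<lambda>j. x (int s + int j)) [0..<k]"

lemma sets_cylinder [measurable]: "cylinder bl \<in> sets (path_space :: (int \<Rightarrow> 'b) measure)"
  unfolding cylinder_def by (rule sets_path_space_Collect) measurable

lemma length_block [simp]: "length (block k s x) = k"
  by (simp add: block_def)

lemma path_shift_in_cylinder_block: "path_shift s x \<in> cylinder (block k s x)"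
  by (simp add: cylinder_def block_def path_shift_def ac_simps)

lemma blk_match_iff_path_shift_in_cylinder:
  assumes "k \<le> n + 1" "1 \<le> t" "t \<le> n + 1 - k"
  shows "blk_match X k n t \<omega> \<longleftrightarrow>
    path_shift (n + 1 - k - t) (\<lambda>i. X i \<omega>) \<in> cylinder (block k (n + 1 - k) (\<lambda>i. X i \<omega>))"
proof -
  have start: "int (n + 1 - k) = int n - int k + 1"
    and shift: "int (n + 1 - k - t) = int n - int k + 1 - int t"
    using assms by auto
  show ?thesis
    unfolding blk_match_def cylinder_def block_def path_shift_def start shift by (simp add: ac_simps)
qed

lemma card_Collect_atLeastAtMost_diff:
  "card {t \<in> {1..s::nat}. P (s - t)} = card {m. m < s \<and> P m}"
proof -
  have "bij_betw (\<lambda>m. s - m) {m. m < s \<and> P m} {t \<in> {1..s}. P (s - t)}"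
    by (rule bij_betwI[where g = "\<lambda>t. s - t"]) auto
  then show ?thesis by (simp add: bij_betw_same_card)
qed

lemma card_blk_match_eq_visits:
  assumes "k \<le> n + 1"
  shows "card {t \<in> {1..n + 1 - k}. blk_match X k n t \<omega>} =
    visits (cylinder (block k (n + 1 - k) (\<lambda>i. X i \<omega>))) (n + 1 - k) (\<lambda>i. X i \<omega>)"
proof -
  let ?s = "n + 1 - k"
  let ?P = "\<lambda>m. path_shift m (\<lambda>i. X i \<omega>) \<in> cylinder (block k ?s (\<lambda>i. X i \<omega>))"
  have "{t \<in> {1..?s}. blk_match X k n t \<omega>} = {t \<in> {1..?s}. ?P (?s - t)}"
  proof (rule Collect_cong)
    fix t
    show "t \<in> {1..?s} \<and> blk_match X k n t \<omega> \<longleftrightarrow> t \<in> {1..?s} \<and> ?P (?s - t)"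
      using blk_match_iff_path_shift_in_cylinder[OF assms, of t X \<omega>] by auto
  qed
  then show ?thesis
    unfolding visits_def using card_Collect_atLeastAtMost_diff[of ?s ?P] by (simp only:)
qed

lemma tau_eq_enat_if_card_blk_match:
  assumes "i \<le> card {t \<in> {1..B}. blk_match X k n t \<omega>}"
  shows "\<exists>s\<le>B. tau X k n i \<omega> = enat s \<and> card {t \<in> {1..s}. blk_match X k n t \<omega>} = i"
  using assms
proof (induction i)
  case 0
  then show ?case by (intro exI[of _ 0]) (simp add: zero_enat_def)
next
  case (Suc i)
  let ?P = "\<lambda>t. blk_match X k n t \<omega>"
  from Suc obtain s where s: "s \<le> B" "tau X k n i \<omega> = enat s" "card {t \<in> {1..s}. ?P t} = i"
    by force
  have "\<exists>t. s < t \<and> t \<le> B \<and> ?P t"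
  proof (rule ccontr)
    assume "\<not> ?thesis"
    then have "{t \<in> {1..B}. ?P t} \<subseteq> {t \<in> {1..s}. ?P t}"
      by (auto simp: not_less)
    then have "card {t \<in> {1..B}. ?P t} \<le> card {t \<in> {1..s}. ?P t}"
      by (intro card_mono) auto
    then show False using Suc.prems s(3) by simp
  qed
  then obtain t1 where t1: "s < t1" "t1 \<le> B" "?P t1" by blast
  define s' where "s' = (LEAST t. s < t \<and> ?P t)"
  have s': "s < s'" "?P s'"
    using LeastI[of "\<lambda>t. s < t \<and> ?P t", OF conjI[OF t1(1,3)]] unfolding s'_def by auto
  have "s' \<le> t1"
    unfolding s'_def by (rule Least_le) (use t1 in auto)
  have no_match_between: "\<not> ?P t" if "s < t" "t < s'" for t
    using that not_less_Least unfolding s'_def by blast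
  have "tau X k n (Suc i) \<omega> = enat s'"
    using s(2) t1 by (simp add: s'_def) blast
  moreover have "{t \<in> {1..s'}. ?P t} = insert s' {t \<in> {1..s}. ?P t}"
    using s' no_match_between by (auto simp: not_less) (meson not_le order_le_less)
  then have "card {t \<in> {1..s'}. ?P t} = Suc i"
    using s'(1) s(3) by simp
  ultimately show ?case using \<open>s' \<le> t1\<close> t1(2) by (intro exI[of _ s']) auto
qed

lemma le_kappa_if_card_blk_match:
  assumes "1 \<le> k" "k \<le> K n" "k \<le> n + 1"
    and "J n \<le> card {t \<in> {1..n + 1 - k}. blk_match X k n t \<omega>}"
  shows "k \<le> kappa X K J n \<omega>"
proof -
  define S where "S = {k. 1 \<le> k \<and> k \<le> K n \<and> k \<le> n + 1 \<and> tau X k n (J n) \<omega> \<le> enat (n + 1 - k)}"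
  have "k \<in> S"
    using tau_eq_enat_if_card_blk_match[OF assms(4)] assms(1-3) unfolding S_def by auto
  moreover have "finite S" unfolding S_def by (rule finite_subset[of _ "{..K n}"]) auto
  ultimately show ?thesis unfolding kappa_def S_def[symmetric] Let_def by auto
qed

lemma filterlim_kappa_at_top:
  assumes "filterlim K at_top sequentially"
    and matches: "\<And>k. \<forall>\<^sub>F n in sequentially. J n \<le> card {t \<in> {1..n + 1 - k}. blk_match X k n t \<omega>}"
  shows "filterlim (\<lambda>n. kappa X K J n \<omega>) at_top sequentially"
  unfolding filterlim_at_top
proof
  fix Z :: nat
  define k where "k = max Z 1"
  have "\<forall>\<^sub>F n in sequentially. k \<le> K n"
    using assms(1) unfolding filterlim_at_top by blast
  moreover have "\<forall>\<^sub>F n in sequentially. k \<le> n" by (rule eventually_ge_at_top)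
  ultimately show "\<forall>\<^sub>F n in sequentially. Z \<le> kappa X K J n \<omega>"
    using matches[of k]
  proof eventually_elim
    case (elim n)
    then have "k \<le> kappa X K J n \<omega>"
      by (intro le_kappa_if_card_blk_match) (auto simp: k_def)
    then show ?case by (simp add: k_def)
  qed
qed

lemma eventually_le_visits_if_pos_lower_density:
  assumes "x \<in> pos_lower_density C" and J: "(\<lambda>n. real (J n) / real n) \<longlonglongrightarrow> 0"
  shows "\<forall>\<^sub>F n in sequentially. J n \<le> visits C (n - d) x"
proof -
  obtain j N where density: "\<And>n. n \<ge> N \<Longrightarrow> real n / real (Suc j) \<le> real (visits C n x)"
    using assms(1) unfolding pos_lower_density_def by blast
  have "\<forall>\<^sub>F n in sequentially. real (J n) / real n < 1 / (2 * real (Suc j))"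
    by (rule order_tendstoD(2)[OF J]) simp
  moreover have "\<forall>\<^sub>F n in sequentially. N + 2 * d + 1 \<le> n"
    by (rule eventually_ge_at_top)
  ultimately show ?thesis
  proof eventually_elim
    case (elim n)
    then have "real (J n) < 1 / (2 * real (Suc j)) * real n"
      by (simp only: pos_divide_less_eq of_nat_0_less_iff)
    also have "\<dots> = (real n / 2) / real (Suc j)"
      by simp
    also have "\<dots> \<le> real (n - d) / real (Suc j)"
      using elim(2) by (intro divide_right_mono) (auto simp: of_nat_diff)
    also have "\<dots> \<le> real (visits C (n - d) x)"
      using elim(2) by (intro density) auto
    finally show ?case by simp
  qed
qed

text \<open>Only finitely many blocks of length \<open>k\<close> exist; those ever visited are visited with
  positive density, which beats the sublinear \<open>J n\<close>.\<close>
lemma eventually_le_visits_block: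
  fixes x :: "int \<Rightarrow> 'b::finite"
  assumes dichotomy: "\<And>bl. (\<forall>m. path_shift m x \<notin> cylinder bl) \<or> x \<in> pos_lower_density (cylinder bl)"
    and J: "(\<lambda>n. real (J n) / real n) \<longlonglongrightarrow> 0"
  shows "\<forall>\<^sub>F n in sequentially. J n \<le> visits (cylinder (block k (n + 1 - k) x)) (n + 1 - k) x"
proof -
  define G where "G = {bl :: 'b list. length bl = k \<and> x \<in> pos_lower_density (cylinder bl)}"
  have "finite G"
    by (rule finite_subset[OF _ finite_lists_length_eq[of "UNIV :: 'b set" k]]) (auto simp: G_def)
  moreover have "\<forall>bl\<in>G. \<forall>\<^sub>F n in sequentially. J n \<le> visits (cylinder bl) (n - k) x"
    unfolding G_def using eventually_le_visits_if_pos_lower_density[OF _ J] by blast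
  ultimately have "\<forall>\<^sub>F n in sequentially. \<forall>bl\<in>G. J n \<le> visits (cylinder bl) (n - k) x"
    by (simp add: eventually_ball_finite_distrib)
  then show ?thesis
  proof eventually_elim
    case (elim n)
    have "block k (n + 1 - k) x \<in> G"
      using dichotomy[of "block k (n + 1 - k) x"] path_shift_in_cylinder_block
      unfolding G_def by auto
    moreover have "visits C (n - k) x \<le> visits C (n + 1 - k) x" for C
      by (rule visits_mono) simp
    ultimately show ?case
      using elim by (meson le_trans)
  qed
qed

lemma AE_eventually_le_visits_block:
  fixes \<mu> :: "(int \<Rightarrow> 'b::finite) measure"
  assumes "ergodic_shift_measure \<mu>" and J: "(\<lambda>n. real (J n) / real n) \<longlonglongrightarrow> 0"
  shows "AE x in \<mu>. \<forall>k. \<forall>\<^sub>F n in sequentially.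
    J n \<le> visits (cylinder (block k (n + 1 - k) x)) (n + 1 - k) x"
proof -
  interpret ergodic_shift_measure \<mu> by fact
  have "AE x in \<mu>. \<forall>bl. (\<forall>m. path_shift m x \<notin> cylinder bl) \<or> x \<in> pos_lower_density (cylinder bl)"
    by (subst AE_all_countable) (simp add: AE_never_visits_or_pos_lower_density)
  then show ?thesis
    by (rule eventually_mono) (intro allI eventually_le_visits_block[OF _ J], blast)
qed

lemma measurable_process_path [measurable]:
  assumes "stationary_process M X"
  shows "(\<lambda>\<omega> i. X i \<omega>) \<in> measurable M path_space"
proof (rule measurable_PiM_single')
  show "(\<lambda>\<omega>. X i \<omega>) \<in> measurable M (count_space UNIV)" for i
    using assms unfolding stationary_process_def by blast
qed simp

lemma ergodic_shift_measure_distr_process: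
  assumes "prob_space M" "stationary_process M X" "ergodic_process M X"
  shows "ergodic_shift_measure (distr M path_space (\<lambda>\<omega> i. X i \<omega>))"
proof -
  let ?path = "\<lambda>\<omega> i. X i \<omega>"
  have path [measurable]: "?path \<in> measurable M path_space"
    using assms(2) by (rule measurable_process_path)
  have prob: "prob_space (distr M path_space ?path)"
    using assms(1) path by (rule prob_space.prob_space_distr)
  show ?thesis
  proof (intro ergodic_shift_measure.intro shift_invariant_measure.intro prob
      shift_invariant_measure_axioms.intro ergodic_shift_measure_axioms.intro)
    show "sets (distr M path_space ?path) = sets path_space" by simp
  next
    fix A m assume [measurable]: "A \<in> sets (path_space :: (int \<Rightarrow> 'b) measure)"
    have "measure (distr M path_space ?path) (path_shift m -` A) =
        measure M (?path -` (path_shift m -` A) \<inter> space M)"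
      by (rule measure_distr) measurable
    also have "\<dots> = measure M ((\<lambda>\<omega>. path_shift m (?path \<omega>)) -` A \<inter> space M)"
      by (simp only: vimage_comp o_def)
    also have "\<dots> = measure (distr M path_space (\<lambda>\<omega>. path_shift m (?path \<omega>))) A"
      by (rule measure_distr[symmetric]) measurable
    also have "distr M path_space (\<lambda>\<omega>. path_shift m (?path \<omega>)) = distr M path_space ?path"
      using assms(2) unfolding stationary_process_def path_shift_def by simp
    finally show "measure (distr M path_space ?path) (path_shift m -` A) =
        measure (distr M path_space ?path) A" .
  next
    fix A assume A [measurable]: "A \<in> sets (path_space :: (int \<Rightarrow> 'b) measure)"
      and "\<And>x. path_shift 1 x \<in> A \<longleftrightarrow> x \<in> A"
    then have "\<forall>x. x \<in> A \<longleftrightarrow> (\<lambda>i. x (i + 1)) \<in> A"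
      by (simp add: path_shift_def)
    moreover have "?path -` A \<inter> space M = {\<omega> \<in> space M. ?path \<omega> \<in> A}"
      by auto
    ultimately show "measure (distr M path_space ?path) A \<in> {0, 1}"
      using assms(3) A unfolding ergodic_process_def by (simp add: measure_distr)
  qed
qed

theorem lemma2:
  fixes M :: "'a measure" and X :: "int \<Rightarrow> 'a \<Rightarrow> 'b::finite"
    and K J :: "nat \<Rightarrow> nat"
  assumes "prob_space M"
    and "stationary_process M X"
    and "ergodic_process M X"
    and "mono K" and "mono J"
    and "\<And>n. K n \<ge> 1" and "\<And>n. J n \<ge> 1"
    and "filterlim K at_top sequentially"
    and "filterlim J at_top sequentially"
    and "(\<lambda>n. real (J n) / real n) \<longlonglongrightarrow> 0"
  shows "AE \<omega> in M. filterlim (\<lambda>n. kappa X K J n \<omega>) at_top sequentially"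
proof -
  let ?path = "\<lambda>\<omega> i. X i \<omega>"
  have "AE \<omega> in M. \<forall>k. \<forall>\<^sub>F n in sequentially.
      J n \<le> visits (cylinder (block k (n + 1 - k) (?path \<omega>))) (n + 1 - k) (?path \<omega>)"
    using measurable_process_path[OF assms(2)]
    by (rule AE_distrD) (rule AE_eventually_le_visits_block[OF
      ergodic_shift_measure_distr_process[OF assms(1-3)] assms(10)])
  then show ?thesis
  proof eventually_elim
    case (elim \<omega>)
    show ?case
    proof (rule filterlim_kappa_at_top[OF assms(8)])
      fix k
      show "\<forall>\<^sub>F n in sequentially. J n \<le> card {t \<in> {1..n + 1 - k}. blk_match X k n t \<omega>}"
        using elim[rule_format, of k] eventually_ge_at_top[of k]
        by eventually_elim (subst card_blk_match_eq_visits, auto)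
    qed
  qed
qed

end
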